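(* Let $p\ge1$, let $\mu\in\mathscr P_p(\mathbb R)$ be atomless and $\varepsilon\in(0,1/2)$. Then for every $q\in[1,p]$, $$\operatorname{diam}(I_\varepsilon[\mu])^{p-q}\,\mathbb W_q(\mu,\mathcal C_\varepsilon\mu)^q\le C\int_{I_\varepsilon[\mu]^c}|x-x_\mu|^p\,d\mu(x),$$ for a constant $C>0$ depending only on $p$, where $x_\mu:=X_\mu(1/2)$ is the median of $\mu$. If $q=p$ one can take $C=1$.
   Context: For $\mu\in\mathscr P(\mathbb R)$ the quantile function is $X_\mu(z)=\inf\{a\in\mathbb R:\mu(-\infty,a)>z\}$, $z\in(0,1)$. For $\varepsilon\in(0,1/2)$, $I_\varepsilon[\mu]=[X_\mu(\varepsilon),X_\mu(1-\varepsilon)]$ and, for a measure $\nu$, $\mathcal C_\varepsilon(\nu|\mu)=\frac1{1-2\varepsilon}\,\nu\llcorner I_\varepsilon[\mu]$; $\mathcal C_\varepsilon\mu:=\mathcal C_\varepsilon(\mu|\mu)$. $\mathbb W_q$ is the $q$-Wasserstein distance. *)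

theory Defs
  imports "HOL-Probability.Probability"
begin

definition quantile :: "real measure \<Rightarrow> real \<Rightarrow> real" where
  "quantile \<mu> z = Inf {a. measure \<mu> {..<a} > z}"

definition Ieps :: "real measure \<Rightarrow> real \<Rightarrow> real set" where
  "Ieps \<mu> \<epsilon> = {quantile \<mu> \<epsilon> .. quantile \<mu> (1 - \<epsilon>)}"

definition trim_cond :: "real \<Rightarrow> real measure \<Rightarrow> real measure \<Rightarrow> real measure" where
  "trim_cond \<epsilon> \<nu> \<mu> = density \<nu> (\<lambda>x. ennreal (indicator (Ieps \<mu> \<epsilon>) x / (1 - 2 * \<epsilon>)))"

definition trim :: "real \<Rightarrow> real measure \<Rightarrow> real measure" where
  "trim \<epsilon> \<mu> = trim_cond \<epsilon> \<mu> \<mu>"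

definition Pp :: "real \<Rightarrow> real measure set" where
  "Pp p = {\<mu>. prob_space \<mu> \<and> sets \<mu> = sets borel \<and> integrable \<mu> (\<lambda>x. \<bar>x\<bar> powr p)}"

definition atomless :: "real measure \<Rightarrow> bool" where
  "atomless \<mu> \<longleftrightarrow> (\<forall>x. emeasure \<mu> {x} = 0)"

definition couplings :: "real measure \<Rightarrow> real measure \<Rightarrow> (real \<times> real) measure set" where
  "couplings \<mu> \<nu> = {\<pi>. prob_space \<pi> \<and> sets \<pi> = sets (borel \<Otimes>\<^sub>M borel) \<and>
      distr \<pi> borel fst = \<mu> \<and> distr \<pi> borel snd = \<nu>}"

definition wass_cost :: "real \<Rightarrow> real measure \<Rightarrow> real measure \<Rightarrow> ennreal" where
  "wass_cost q \<mu> \<nu> = (INF \<pi>\<in>couplings \<mu> \<nu>. \<integral>\<^sup>+ z. ennreal (\<bar>fst z - snd z\<bar> powr q) \<partial>\<pi>)"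

definition Wasserstein :: "real \<Rightarrow> real measure \<Rightarrow> real measure \<Rightarrow> real" where
  "Wasserstein q \<mu> \<nu> = enn2real (wass_cost q \<mu> \<nu>) powr (1 / q)"

text \<open>Real power with the convention x^0 = 1 (also for x = 0), unlike powr.\<close>
definition rpow :: "real \<Rightarrow> real \<Rightarrow> real" where
  "rpow x a = (if a = 0 then 1 else x powr a)"

end

(* The plan that keeps \<mu> in place on I = I_eps[\<mu>] and spreads the lower (upper) tail, of mass
   eps, proportionally to \<mu> over the lower (upper) half of I, of mass 1/2 - eps, is a coupling of
   \<mu> and C_eps \<mu>. A tail point x moves towards the median x_\<mu> without passing it, so
   W_q(\<mu>, C_eps \<mu>)^q is at most the tail moment T_q = \<integral>_(I^c) |x - x_\<mu>|^q d\<mu>; this is the case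
   q = p. For q < p, with D = diam I, the pointwise bound D^(p-q) t^q \<le> D^p + t^p gives
   D^(p-q) T_q \<le> 2 eps D^p + T_p; and since one half of I has length at least D/2 and the tail
   beyond it has mass eps, eps (D/2)^p \<le> T_p. Hence C = 2^(p+1) + 1. *)

theory Submission
  imports Defs
begin

lemma Inf_superlevel_set_eq:
  fixes F :: "real \<Rightarrow> real"
  assumes cont: "continuous_on UNIV F" and "mono F" and "F a \<le> z" and "z < F b"
  shows "F (Inf {x. z < F x}) = z"
proof -
  let ?S = "{x. z < F x}"
  have "?S \<noteq> {}" using \<open>z < F b\<close> by auto
  have above_a: "a < s" if "s \<in> ?S" for s
  proof (rule ccontr)
    assume "\<not> a < s"
    then have "F s \<le> F a" using \<open>mono F\<close> by (simp add: monoD)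
    then show False using that \<open>F a \<le> z\<close> by simp
  qed
  then have "bdd_below ?S" by (meson bdd_belowI less_imp_le)
  \<comment> \<open>the open set \<open>?S\<close> misses its infimum, the closed set \<open>{x. z \<le> F x}\<close> contains it\<close>
  have "Inf ?S \<notin> ?S"
    using above_a by (intro Inf_notin_open open_Collect_less continuous_on_const cont) auto
  moreover have "Inf ?S \<in> {x. z \<le> F x}"
    by (rule closed_subset_contains_Inf[OF closed_Collect_le[OF continuous_on_const cont]])
      (use \<open>?S \<noteq> {}\<close> \<open>bdd_below ?S\<close> in auto)
  ultimately show ?thesis by simp
qed

lemma abs_diff_powr_le:
  fixes x y p :: real
  assumes "0 \<le> p"
  shows "\<bar>x - y\<bar> powr p \<le> 2 powr p * (\<bar>x\<bar> powr p + \<bar>y\<bar> powr p)"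
proof -
  have "\<bar>x - y\<bar> powr p \<le> (2 * max \<bar>x\<bar> \<bar>y\<bar>) powr p"
    using assms by (intro powr_mono2) auto
  also have "\<dots> = 2 powr p * max \<bar>x\<bar> \<bar>y\<bar> powr p" by (simp add: powr_mult)
  also have "\<dots> \<le> 2 powr p * (\<bar>x\<bar> powr p + \<bar>y\<bar> powr p)"
    by (intro mult_left_mono) (auto simp: max_def)
  finally show ?thesis .
qed

lemma rpow_mult_powr_le:
  fixes D t p q :: real
  assumes "0 \<le> D" "0 \<le> t" "0 \<le> q" "q \<le> p"
  shows "rpow D (p - q) * t powr q \<le> D powr p + t powr p"
proof (cases "q = p")
  case False
  have "D powr (p - q) * t powr q \<le> max D t powr (p - q) * max D t powr q"
    using assms by (intro mult_mono powr_mono2) auto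
  also have "\<dots> = max D t powr p" by (simp flip: powr_add)
  also have "\<dots> \<le> D powr p + t powr p" by (simp add: max_def)
  finally show ?thesis using False by (simp add: rpow_def)
qed (simp add: rpow_def)

lemma (in finite_borel_measure) integrable_abs_diff_powr:
  assumes "0 \<le> p" and int: "integrable M (\<lambda>x. \<bar>x\<bar> powr p)"
  shows "integrable M (\<lambda>x. \<bar>x - c\<bar> powr p)"
proof (rule Bochner_Integration.integrable_bound)
  show "integrable M (\<lambda>x. 2 powr p * (\<bar>x\<bar> powr p + \<bar>c\<bar> powr p))" using int by simp
  show "(\<lambda>x. \<bar>x - c\<bar> powr p) \<in> borel_measurable M" using M_is_borel by measurable
  show "AE x in M. norm (\<bar>x - c\<bar> powr p) \<le> norm (2 powr p * (\<bar>x\<bar> powr p + \<bar>c\<bar> powr p))"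
    using abs_diff_powr_le[OF \<open>0 \<le> p\<close>] by (auto intro!: AE_I2 order_trans[OF _ abs_ge_self])
qed

lemma normalized_set_nn_integral_le:
  fixes g :: "'a \<Rightarrow> ennreal"
  assumes "A \<in> sets M" "c * emeasure M A = 1" "\<And>y. y \<in> A \<Longrightarrow> g y \<le> b"
  shows "c * (\<integral>\<^sup>+y\<in>A. g y \<partial>M) \<le> b"
proof -
  have "(\<integral>\<^sup>+y\<in>A. g y \<partial>M) \<le> (\<integral>\<^sup>+y. b * indicator A y \<partial>M)"
    using assms(3) by (intro nn_integral_mono) (simp split: split_indicator)
  also have "\<dots> = b * emeasure M A"
    using assms(1) by (rule nn_integral_cmult_indicator)
  finally have "c * (\<integral>\<^sup>+y\<in>A. g y \<partial>M) \<le> c * (b * emeasure M A)"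
    by (rule mult_left_mono) simp
  also have "\<dots> = b"
    using assms(2) by (simp add: mult.left_commute)
  finally show ?thesis .
qed

lemma distr_eqI_nn_integral_indicator:
  assumes [measurable]: "f \<in> measurable N borel" and "sets \<mu> = sets borel"
    and "\<And>A. A \<in> sets borel \<Longrightarrow> (\<integral>\<^sup>+z. indicator A (f z) \<partial>N) = emeasure \<mu> A"
  shows "distr N borel f = \<mu>"
proof (rule measure_eqI)
  fix A assume "A \<in> sets (distr N borel f)"
  then have [measurable]: "A \<in> sets borel" by simp
  have "emeasure (distr N borel f) A = emeasure N (f -` A \<inter> space N)"
    by (rule emeasure_distr) simp_all
  also have "\<dots> = (\<integral>\<^sup>+z. indicator (f -` A \<inter> space N) z \<partial>N)"
    by (rule nn_integral_indicator[symmetric]) measurable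
  also have "\<dots> = (\<integral>\<^sup>+z. indicator A (f z) \<partial>N)"
    by (rule nn_integral_cong) (simp split: split_indicator)
  finally show "emeasure (distr N borel f) A = emeasure \<mu> A" using assms(3) by simp
qed (use assms(2) in simp)

lemma Wasserstein_powr_eq:
  "q \<noteq> 0 \<Longrightarrow> Wasserstein q \<mu> \<nu> powr q = enn2real (wass_cost q \<mu> \<nu>)"
  unfolding Wasserstein_def by (simp add: powr_powr)

lemma Ieps_in_borel [measurable]: "Ieps \<mu> \<epsilon> \<in> sets borel"
  unfolding Ieps_def by simp

lemma nn_integral_trim_cond:
  assumes [measurable_cong]: "sets \<nu> = sets borel" and "\<epsilon> < 1/2"
    and [measurable]: "f \<in> borel_measurable borel"
  shows "(\<integral>\<^sup>+x. f x \<partial>trim_cond \<epsilon> \<nu> \<mu>) = ennreal (1 / (1 - 2 * \<epsilon>)) * (\<integral>\<^sup>+x\<in>Ieps \<mu> \<epsilon>. f x \<partial>\<nu>)"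
proof -
  have "(\<integral>\<^sup>+x. f x \<partial>trim_cond \<epsilon> \<nu> \<mu>)
      = (\<integral>\<^sup>+x. ennreal (1 / (1 - 2 * \<epsilon>)) * (f x * indicator (Ieps \<mu> \<epsilon>) x) \<partial>\<nu>)"
    unfolding trim_cond_def Ieps_def
    by (subst nn_integral_density) (auto intro!: nn_integral_cong simp: indicator_def)
  then show ?thesis unfolding Ieps_def by (simp add: nn_integral_cmult)
qed

locale atomless_real_distribution = real_distribution M for M :: "real measure" +
  assumes atomless: "atomless M"
begin

lemma measure_singleton [simp]: "measure M {x} = 0"
  using atomless unfolding atomless_def measure_def by simp

lemma measure_lessThan_eq_cdf: "measure M {..<x} = cdf M x"
proof -
  have "measure M ({..<x} \<union> {x}) = measure M {..<x} + measure M {x}"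
    by (rule finite_measure_Union) auto
  moreover have "{..<x} \<union> {x} = {..x}" by auto
  ultimately show ?thesis by (simp add: cdf_def)
qed

lemma measure_lessThan_quantile:
  assumes "0 < z" "z < 1"
  shows "measure M {..<quantile M z} = z"
proof -
  obtain a where "cdf M a < z"
    using order_tendstoD(2)[OF cdf_lim_at_bot \<open>0 < z\<close>] by (auto simp: eventually_at_bot_linorder)
  moreover obtain b where "z < cdf M b"
    using order_tendstoD(1)[OF cdf_lim_at_top_prob \<open>z < 1\<close>] by (auto simp: eventually_at_top_linorder)
  moreover have "continuous_on UNIV (cdf M)" by (simp add: continuous_at_imp_continuous_on isCont_cdf)
  ultimately show ?thesis
    unfolding quantile_def measure_lessThan_eq_cdf
    by (intro Inf_superlevel_set_eq[of _ a _ b]) (auto simp: mono_def cdf_nondecreasing)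
qed

lemma quantile_less:
  assumes "0 < z" "z < z'" "z' < 1"
  shows "quantile M z < quantile M z'"
proof (rule ccontr)
  assume "\<not> quantile M z < quantile M z'"
  then have "measure M {..<quantile M z'} \<le> measure M {..<quantile M z}"
    by (intro finite_measure_mono) auto
  then show False using assms by (simp add: measure_lessThan_quantile)
qed

lemma measure_greaterThanAtMost:
  "x \<le> y \<Longrightarrow> measure M {x<..y} = measure M {..<y} - measure M {..<x}"
  by (cases "x = y") (simp_all add: measure_lessThan_eq_cdf cdf_diff_eq)

lemma measure_atLeastAtMost:
  assumes "x \<le> y"
  shows "measure M {x..y} = measure M {..<y} - measure M {..<x}"
proof -
  have "measure M ({x<..y} \<union> {x}) = measure M {x<..y} + measure M {x}"
    by (rule finite_measure_Union) auto
  moreover have "{x<..y} \<union> {x} = {x..y}" using assms by auto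
  ultimately show ?thesis using assms by (simp add: measure_greaterThanAtMost)
qed

lemma measure_greaterThan: "measure M {x<..} = 1 - measure M {..<x}"
proof -
  have "{x<..} = space M - {..x}" by auto
  then show ?thesis using prob_compl[of "{..x}"] by (simp add: measure_lessThan_eq_cdf cdf_def)
qed

end

locale quantile_trimming = atomless_real_distribution +
  fixes \<epsilon> :: real
  assumes \<epsilon>_pos: "0 < \<epsilon>" and \<epsilon>_less_half: "\<epsilon> < 1/2"
begin

abbreviation "lo \<equiv> quantile M \<epsilon>"
abbreviation "med \<equiv> quantile M (1/2)"
abbreviation "hi \<equiv> quantile M (1 - \<epsilon>)"
abbreviation "\<kappa> \<equiv> 1 / (1/2 - \<epsilon>)"

lemma lo_less_med: "lo < med"
  using \<epsilon>_pos \<epsilon>_less_half by (intro quantile_less) auto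

lemma med_less_hi: "med < hi"
  using \<epsilon>_pos \<epsilon>_less_half by (intro quantile_less) auto

lemma Ieps_eq: "Ieps M \<epsilon> = {lo..hi}"
  unfolding Ieps_def ..

lemma emeasure_lessThan_lo: "emeasure M {..<lo} = \<epsilon>"
  using \<epsilon>_pos \<epsilon>_less_half by (simp add: emeasure_eq_measure measure_lessThan_quantile)

lemma emeasure_greaterThan_hi: "emeasure M {hi<..} = \<epsilon>"
  using \<epsilon>_pos \<epsilon>_less_half by (simp add: emeasure_eq_measure measure_greaterThan measure_lessThan_quantile)

lemma kappa_mult_emeasure_halves:
  "ennreal \<kappa> * emeasure M {lo..med} = 1" "ennreal \<kappa> * emeasure M {med<..hi} = 1"
proof -
  have "measure M {lo..med} = 1/2 - \<epsilon>" "measure M {med<..hi} = 1/2 - \<epsilon>"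
    using lo_less_med med_less_hi \<epsilon>_pos \<epsilon>_less_half
    by (simp_all add: measure_atLeastAtMost measure_greaterThanAtMost measure_lessThan_quantile)
  then show "ennreal \<kappa> * emeasure M {lo..med} = 1" "ennreal \<kappa> * emeasure M {med<..hi} = 1"
    using \<epsilon>_less_half by (simp_all add: emeasure_eq_measure flip: ennreal_mult)
qed

lemma emeasure_outside_Ieps: "emeasure M (- Ieps M \<epsilon>) = 2 * \<epsilon>"
proof -
  have "- Ieps M \<epsilon> = {..<lo} \<union> {hi<..}" unfolding Ieps_eq by auto
  moreover have "{..<lo} \<inter> {hi<..} = {}" using lo_less_med med_less_hi by auto
  ultimately show ?thesis
    using \<epsilon>_pos by (simp add: plus_emeasure[symmetric] emeasure_lessThan_lo emeasure_greaterThan_hi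
        flip: ennreal_plus)
qed

text \<open>Mass of \<open>I\<^sub>\<epsilon>[\<mu>]\<close> stays in place: there the density is \<open>1\<close> in the second
  coordinate, which \<open>trim_map\<close> then discards by collapsing onto the diagonal.\<close>

definition trim_density :: "real \<times> real \<Rightarrow> ennreal" where
  "trim_density z = indicator (Ieps M \<epsilon>) (fst z)
     + ennreal \<kappa> * (indicator {..<lo} (fst z) * indicator {lo..med} (snd z)
                  + indicator {hi<..} (fst z) * indicator {med<..hi} (snd z))"

definition trim_map :: "real \<times> real \<Rightarrow> real \<times> real" where
  "trim_map z = (fst z, if fst z \<in> Ieps M \<epsilon> then fst z else snd z)"

definition trim_plan :: "(real \<times> real) measure" where
  "trim_plan = distr (density (M \<Otimes>\<^sub>M M) trim_density) (borel \<Otimes>\<^sub>M borel) trim_map"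

lemma sets_trim_plan [measurable_cong]: "sets trim_plan = sets (borel \<Otimes>\<^sub>M borel)"
  unfolding trim_plan_def by simp

lemma nn_integral_trim_plan:
  assumes [measurable]: "\<phi> \<in> borel_measurable (borel \<Otimes>\<^sub>M borel)"
  shows "(\<integral>\<^sup>+z. \<phi> z \<partial>trim_plan) = (\<integral>\<^sup>+x. indicator (Ieps M \<epsilon>) x * \<phi> (x, x)
     + ennreal \<kappa> * (indicator {..<lo} x * (\<integral>\<^sup>+y\<in>{lo..med}. \<phi> (x, y) \<partial>M)
                  + indicator {hi<..} x * (\<integral>\<^sup>+y\<in>{med<..hi}. \<phi> (x, y) \<partial>M)) \<partial>M)"
proof -
  have "(\<integral>\<^sup>+z. \<phi> z \<partial>trim_plan) = (\<integral>\<^sup>+z. trim_density z * \<phi> (trim_map z) \<partial>(M \<Otimes>\<^sub>M M))"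
    unfolding trim_plan_def trim_density_def trim_map_def
    by (subst nn_integral_distr) (simp_all add: nn_integral_density)
  also have "\<dots> = (\<integral>\<^sup>+x. \<integral>\<^sup>+y. indicator (Ieps M \<epsilon>) x * \<phi> (x, x)
     + ennreal \<kappa> * (indicator {..<lo} x * (\<phi> (x, y) * indicator {lo..med} y)
                  + indicator {hi<..} x * (\<phi> (x, y) * indicator {med<..hi} y)) \<partial>M \<partial>M)"
    using lo_less_med med_less_hi
    unfolding trim_density_def trim_map_def Ieps_eq
    by (subst nn_integral_fst[symmetric]) (auto intro!: nn_integral_cong simp: indicator_def)
  also have "\<dots> = (\<integral>\<^sup>+x. indicator (Ieps M \<epsilon>) x * \<phi> (x, x)
     + ennreal \<kappa> * (indicator {..<lo} x * (\<integral>\<^sup>+y\<in>{lo..med}. \<phi> (x, y) \<partial>M)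
                  + indicator {hi<..} x * (\<integral>\<^sup>+y\<in>{med<..hi}. \<phi> (x, y) \<partial>M)) \<partial>M)"
    by (intro nn_integral_cong) (simp add: nn_integral_add nn_integral_cmult emeasure_space_1[unfolded space_eq_univ])
  finally show ?thesis .
qed

lemma nn_integral_trim_plan_fst:
  assumes [measurable]: "f \<in> borel_measurable borel"
  shows "(\<integral>\<^sup>+z. f (fst z) \<partial>trim_plan) = (\<integral>\<^sup>+x. f x \<partial>M)"
proof -
  have "(\<integral>\<^sup>+z. f (fst z) \<partial>trim_plan) = (\<integral>\<^sup>+x. indicator (Ieps M \<epsilon>) x * f x
     + ennreal \<kappa> * (indicator {..<lo} x * (f x * emeasure M {lo..med})
                  + indicator {hi<..} x * (f x * emeasure M {med<..hi})) \<partial>M)"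
    by (simp add: nn_integral_trim_plan nn_integral_cmult_indicator)
  also have "\<dots> = (\<integral>\<^sup>+x. f x \<partial>M)"
    using kappa_mult_emeasure_halves lo_less_med med_less_hi
    by (intro nn_integral_cong) (auto simp: Ieps_eq indicator_def mult.left_commute[of "ennreal \<kappa>"])
  finally show ?thesis .
qed

lemma nn_integral_trim_plan_snd:
  assumes [measurable]: "f \<in> borel_measurable borel"
  shows "(\<integral>\<^sup>+z. f (snd z) \<partial>trim_plan) = (\<integral>\<^sup>+x. f x \<partial>trim \<epsilon> M)"
proof -
  define F where "F = (\<integral>\<^sup>+x\<in>Ieps M \<epsilon>. f x \<partial>M)"
  define FL where "FL = (\<integral>\<^sup>+y\<in>{lo..med}. f y \<partial>M)"
  define FR where "FR = (\<integral>\<^sup>+y\<in>{med<..hi}. f y \<partial>M)"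
  have union: "{lo..med} \<union> {med<..hi} = Ieps M \<epsilon>" and disjoint: "{lo..med} \<inter> {med<..hi} = {}"
    using lo_less_med med_less_hi by (auto simp: Ieps_eq)
  have halves: "F = FL + FR"
    unfolding F_def FL_def FR_def union[symmetric] by (rule nn_integral_disjoint_pair) (simp_all add: disjoint)
  have "(\<integral>\<^sup>+z. f (snd z) \<partial>trim_plan) = (\<integral>\<^sup>+x. f x * indicator (Ieps M \<epsilon>) x
     + ennreal \<kappa> * FL * indicator {..<lo} x + ennreal \<kappa> * FR * indicator {hi<..} x \<partial>M)"
    unfolding nn_integral_trim_plan[OF measurable_compose[OF measurable_snd assms]] FL_def FR_def
    using lo_less_med med_less_hi
    by (intro nn_integral_cong) (auto simp: distrib_left split: split_indicator)
  also have "\<dots> = F + ennreal \<kappa> * FL * \<epsilon> + ennreal \<kappa> * FR * \<epsilon>"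
    by (simp add: F_def nn_integral_add nn_integral_cmult_indicator emeasure_lessThan_lo
        emeasure_greaterThan_hi)
  also have "\<dots> = (1 + ennreal \<kappa> * \<epsilon>) * F"
    unfolding halves by (simp add: distrib_left distrib_right mult.commute mult.left_commute add.assoc)
  also have "\<dots> = ennreal (1 + \<kappa> * \<epsilon>) * F"
    using \<epsilon>_pos \<epsilon>_less_half by (simp add: ennreal_plus flip: ennreal_mult)
  also have "1 + \<kappa> * \<epsilon> = 1 / (1 - 2 * \<epsilon>)"
    using \<epsilon>_less_half by (simp add: field_simps)
  finally show ?thesis
    using \<epsilon>_less_half by (simp add: F_def trim_def nn_integral_trim_cond)
qed

lemma trim_plan_in_couplings: "trim_plan \<in> couplings M (trim \<epsilon> M)"
proof -
  have "emeasure trim_plan (space trim_plan) = (\<integral>\<^sup>+z. 1 \<partial>trim_plan)"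
    by simp
  also have "\<dots> = 1"
    using nn_integral_trim_plan_fst[of "\<lambda>_. 1"] by (simp add: emeasure_space_1[unfolded space_eq_univ])
  finally have "prob_space trim_plan" by (rule prob_spaceI)
  moreover have "distr trim_plan borel fst = M"
    by (rule distr_eqI_nn_integral_indicator) (simp_all add: nn_integral_trim_plan_fst)
  moreover have "distr trim_plan borel snd = trim \<epsilon> M"
    by (rule distr_eqI_nn_integral_indicator)
      (simp_all add: nn_integral_trim_plan_snd trim_def trim_cond_def)
  ultimately show ?thesis unfolding couplings_def using sets_trim_plan by simp
qed

lemma wass_cost_trim_le:
  assumes "0 \<le> q"
  shows "wass_cost q M (trim \<epsilon> M) \<le> (\<integral>\<^sup>+x\<in>- Ieps M \<epsilon>. ennreal (\<bar>x - med\<bar> powr q) \<partial>M)"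
proof -
  define cost where "cost z = ennreal (\<bar>fst z - snd z\<bar> powr q)" for z :: "real \<times> real"
  have [measurable]: "cost \<in> borel_measurable (borel \<Otimes>\<^sub>M borel)" unfolding cost_def by measurable
  have [simp]: "cost (x, x) = 0" for x unfolding cost_def by simp
  have cost_le: "cost (x, y) \<le> ennreal (\<bar>x - med\<bar> powr q)" if "\<bar>x - y\<bar> \<le> \<bar>x - med\<bar>" for x y
    unfolding cost_def using that assms by (intro ennreal_leI powr_mono2) auto
  have pointwise: "ennreal \<kappa> * (indicator {..<lo} x * (\<integral>\<^sup>+y\<in>{lo..med}. cost (x, y) \<partial>M)
                  + indicator {hi<..} x * (\<integral>\<^sup>+y\<in>{med<..hi}. cost (x, y) \<partial>M))
      \<le> ennreal (\<bar>x - med\<bar> powr q) * indicator (- Ieps M \<epsilon>) x" for x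
  proof -
    consider "x < lo" | "x \<in> Ieps M \<epsilon>" | "hi < x" unfolding Ieps_eq by fastforce
    then show ?thesis
    proof cases
      case 1
      then have "x \<notin> Ieps M \<epsilon>" "\<not> hi < x" using lo_less_med med_less_hi by (auto simp: Ieps_eq)
      moreover have "ennreal \<kappa> * (\<integral>\<^sup>+y\<in>{lo..med}. cost (x, y) \<partial>M) \<le> ennreal (\<bar>x - med\<bar> powr q)"
        using 1 kappa_mult_emeasure_halves by (intro normalized_set_nn_integral_le cost_le) auto
      ultimately show ?thesis using 1 by simp
    next
      case 3
      then have "x \<notin> Ieps M \<epsilon>" "\<not> x < lo" using lo_less_med med_less_hi by (auto simp: Ieps_eq)
      moreover have "ennreal \<kappa> * (\<integral>\<^sup>+y\<in>{med<..hi}. cost (x, y) \<partial>M) \<le> ennreal (\<bar>x - med\<bar> powr q)"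
        using 3 kappa_mult_emeasure_halves by (intro normalized_set_nn_integral_le cost_le) auto
      ultimately show ?thesis using 3 by simp
    qed (auto simp: Ieps_eq)
  qed
  have "wass_cost q M (trim \<epsilon> M) \<le> (\<integral>\<^sup>+z. cost z \<partial>trim_plan)"
    unfolding wass_cost_def cost_def by (rule INF_lower[OF trim_plan_in_couplings])
  also have "\<dots> \<le> (\<integral>\<^sup>+x\<in>- Ieps M \<epsilon>. ennreal (\<bar>x - med\<bar> powr q) \<partial>M)"
    unfolding nn_integral_trim_plan[OF \<open>cost \<in> _\<close>] by (rule nn_integral_mono) (simp add: pointwise)
  finally show ?thesis .
qed

definition tail_moment :: "real \<Rightarrow> ennreal" where
  "tail_moment r = (\<integral>\<^sup>+x\<in>- Ieps M \<epsilon>. ennreal (\<bar>x - med\<bar> powr r) \<partial>M)"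

lemma tail_moment_ge:
  assumes "A \<in> sets M" "A \<subseteq> - Ieps M \<epsilon>" "0 \<le> d" "0 \<le> r" "\<And>x. x \<in> A \<Longrightarrow> d \<le> \<bar>x - med\<bar>"
  shows "ennreal (d powr r) * emeasure M A \<le> tail_moment r"
proof -
  have "ennreal (d powr r) * emeasure M A = (\<integral>\<^sup>+x. ennreal (d powr r) * indicator A x \<partial>M)"
    using assms(1) by (rule nn_integral_cmult_indicator[symmetric])
  also have "\<dots> \<le> tail_moment r"
    unfolding tail_moment_def using assms(2-5)
    by (intro nn_integral_mono) (auto intro!: powr_mono2 split: split_indicator)
  finally show ?thesis .
qed

lemma tail_moment_ge_half_diameter:
  assumes "0 \<le> r"
  shows "ennreal (\<epsilon> * (diameter (Ieps M \<epsilon>) / 2) powr r) \<le> tail_moment r"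
proof -
  define d where "d = diameter (Ieps M \<epsilon>) / 2"
  have d: "d = (hi - lo) / 2" "0 \<le> d"
    using lo_less_med med_less_hi by (simp_all add: d_def Ieps_eq)
  have "ennreal (d powr r) * \<epsilon> \<le> tail_moment r"
  proof (cases "d \<le> med - lo")
    case True
    have "{..<lo} \<subseteq> - Ieps M \<epsilon>" by (auto simp: Ieps_eq)
    with True show ?thesis
      using tail_moment_ge[of "{..<lo}" d r] d(2) assms by (auto simp: emeasure_lessThan_lo)
  next
    case False
    then have "d \<le> hi - med" using d(1) by simp
    moreover have "{hi<..} \<subseteq> - Ieps M \<epsilon>" by (auto simp: Ieps_eq)
    ultimately show ?thesis
      using tail_moment_ge[of "{hi<..}" d r] d(2) assms by (auto simp: emeasure_greaterThan_hi)
  qed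
  then show ?thesis
    using \<epsilon>_pos by (simp add: d_def ennreal_mult mult.commute)
qed

lemma tail_moment_interpolation:
  assumes "0 \<le> q" "q \<le> p"
  shows "ennreal (rpow (diameter (Ieps M \<epsilon>)) (p - q)) * tail_moment q
       \<le> ennreal (2 powr (p + 1) + 1) * tail_moment p"
proof -
  define D where "D = diameter (Ieps M \<epsilon>)"
  have "0 \<le> D" using lo_less_med med_less_hi by (simp add: D_def Ieps_eq)
  have "ennreal (rpow D (p - q)) * tail_moment q
      = (\<integral>\<^sup>+x\<in>- Ieps M \<epsilon>. ennreal (rpow D (p - q) * \<bar>x - med\<bar> powr q) \<partial>M)"
    unfolding tail_moment_def
    by (subst nn_integral_cmult[symmetric]) (auto intro!: nn_integral_cong simp: rpow_def ennreal_mult mult.assoc)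
  also have "\<dots> \<le> (\<integral>\<^sup>+x\<in>- Ieps M \<epsilon>. ennreal (D powr p) + ennreal (\<bar>x - med\<bar> powr p) \<partial>M)"
    using \<open>0 \<le> D\<close> assms
    by (intro nn_integral_mono) (auto simp: rpow_mult_powr_le simp flip: ennreal_plus split: split_indicator)
  also have "\<dots> = ennreal (D powr p) * emeasure M (- Ieps M \<epsilon>) + tail_moment p"
    unfolding tail_moment_def by (simp add: distrib_right nn_integral_add nn_integral_cmult_indicator)
  also have "ennreal (D powr p) * emeasure M (- Ieps M \<epsilon>) = ennreal (2 powr (p + 1)) * ennreal (\<epsilon> * (D / 2) powr p)"
    using \<open>0 \<le> D\<close> \<epsilon>_pos
    by (simp add: emeasure_outside_Ieps powr_divide powr_add flip: ennreal_mult)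
  also have "\<dots> \<le> ennreal (2 powr (p + 1)) * tail_moment p"
    using assms unfolding D_def by (intro mult_left_mono tail_moment_ge_half_diameter) auto
  finally show ?thesis
    by (simp add: D_def ennreal_plus distrib_right)
qed

lemma tail_moment_eq_set_integral:
  assumes "0 \<le> p" "integrable M (\<lambda>x. \<bar>x\<bar> powr p)"
  shows "tail_moment p = ennreal (LINT x:- Ieps M \<epsilon>|M. \<bar>x - med\<bar> powr p)"
proof -
  have "integrable M (\<lambda>x. \<bar>x - med\<bar> powr p)"
    using assms by (rule integrable_abs_diff_powr)
  then have "(\<integral>\<^sup>+x. ennreal (indicator (- Ieps M \<epsilon>) x *\<^sub>R \<bar>x - med\<bar> powr p) \<partial>M)
      = ennreal (\<integral>x. indicator (- Ieps M \<epsilon>) x *\<^sub>R \<bar>x - med\<bar> powr p \<partial>M)"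
    by (intro nn_integral_eq_integral integrable_mult_indicator) auto
  then show ?thesis
    unfolding tail_moment_def set_lebesgue_integral_def
    by (simp add: indicator_mult_ennreal mult.commute)
qed

lemma tail_integral_nonneg: "0 \<le> (LINT x:- Ieps M \<epsilon>|M. \<bar>x - med\<bar> powr p)"
  unfolding set_lebesgue_integral_def by (rule Bochner_Integration.integral_nonneg) (simp split: split_indicator)

lemma Wasserstein_trim_powr_le:
  assumes "0 < p" "integrable M (\<lambda>x. \<bar>x\<bar> powr p)"
  shows "Wasserstein p M (trim \<epsilon> M) powr p \<le> (LINT x:- Ieps M \<epsilon>|M. \<bar>x - med\<bar> powr p)"
proof -
  have "wass_cost p M (trim \<epsilon> M) \<le> ennreal (LINT x:- Ieps M \<epsilon>|M. \<bar>x - med\<bar> powr p)"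
    using wass_cost_trim_le[of p] tail_moment_eq_set_integral[of p] assms
    by (simp add: tail_moment_def)
  then show ?thesis
    using assms(1) by (simp add: Wasserstein_powr_eq enn2real_leI tail_integral_nonneg)
qed

lemma rpow_diameter_mult_Wasserstein_trim_le:
  assumes "0 < q" "q \<le> p" "integrable M (\<lambda>x. \<bar>x\<bar> powr p)"
  shows "rpow (diameter (Ieps M \<epsilon>)) (p - q) * Wasserstein q M (trim \<epsilon> M) powr q
       \<le> (2 powr (p + 1) + 1) * (LINT x:- Ieps M \<epsilon>|M. \<bar>x - med\<bar> powr p)"
proof -
  define r where "r = rpow (diameter (Ieps M \<epsilon>)) (p - q)"
  define W where "W = wass_cost q M (trim \<epsilon> M)"
  have "0 \<le> r" by (simp add: r_def rpow_def)
  then have "ennreal (r * enn2real W) \<le> ennreal r * W"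
    by (cases W) (simp_all add: ennreal_mult)
  also have "\<dots> \<le> ennreal r * tail_moment q"
    using wass_cost_trim_le[of q] assms(1) by (intro mult_left_mono) (simp_all add: W_def tail_moment_def)
  also have "\<dots> \<le> ennreal (2 powr (p + 1) + 1) * tail_moment p"
    using assms unfolding r_def by (intro tail_moment_interpolation) auto
  also have "\<dots> = ennreal ((2 powr (p + 1) + 1) * (LINT x:- Ieps M \<epsilon>|M. \<bar>x - med\<bar> powr p))"
    using assms by (simp add: tail_moment_eq_set_integral ennreal_mult tail_integral_nonneg)
  finally show ?thesis
    using assms(1) by (simp add: r_def W_def Wasserstein_powr_eq tail_integral_nonneg)
qed

end

lemma quantile_trimming_if_Pp:
  assumes "\<mu> \<in> Pp p" "atomless \<mu>" "0 < \<epsilon>" "\<epsilon> < 1/2"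
  shows "quantile_trimming \<mu> \<epsilon>"
proof -
  have "real_distribution \<mu>"
    using assms(1) by (simp add: Pp_def real_distribution_def real_distribution_axioms_def)
  then show ?thesis
    using assms(2-4) by (simp add: quantile_trimming_def quantile_trimming_axioms_def
        atomless_real_distribution_def atomless_real_distribution_axioms_def)
qed

theorem lemma4p6:
  fixes p :: real
  assumes "p \<ge> 1"
  shows "(\<exists>C>0. \<forall>\<mu> \<epsilon> q. \<mu> \<in> Pp p \<longrightarrow> atomless \<mu> \<longrightarrow> 0 < \<epsilon> \<longrightarrow> \<epsilon> < 1/2 \<longrightarrow>
            1 \<le> q \<longrightarrow> q \<le> p \<longrightarrow>
            rpow (diameter (Ieps \<mu> \<epsilon>)) (p - q) * Wasserstein q \<mu> (trim \<epsilon> \<mu>) powr q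
              \<le> C * (LINT x:(- Ieps \<mu> \<epsilon>)|\<mu>. \<bar>x - quantile \<mu> (1/2)\<bar> powr p))
       \<and> (\<forall>\<mu> \<epsilon>. \<mu> \<in> Pp p \<longrightarrow> atomless \<mu> \<longrightarrow> 0 < \<epsilon> \<longrightarrow> \<epsilon> < 1/2 \<longrightarrow>
            Wasserstein p \<mu> (trim \<epsilon> \<mu>) powr p
              \<le> (LINT x:(- Ieps \<mu> \<epsilon>)|\<mu>. \<bar>x - quantile \<mu> (1/2)\<bar> powr p))"
proof (intro conjI exI[of _ "2 powr (p + 1) + 1"] allI impI)
  show "0 < 2 powr (p + 1) + (1::real)"
    by (simp add: add_pos_pos)
next
  fix \<mu> :: "real measure" and \<epsilon> q :: real
  assume h: "\<mu> \<in> Pp p" "atomless \<mu>" "0 < \<epsilon>" "\<epsilon> < 1/2" "1 \<le> q" "q \<le> p"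
  interpret quantile_trimming \<mu> \<epsilon>
    using h(1-4) by (rule quantile_trimming_if_Pp)
  show "rpow (diameter (Ieps \<mu> \<epsilon>)) (p - q) * Wasserstein q \<mu> (trim \<epsilon> \<mu>) powr q
      \<le> (2 powr (p + 1) + 1) * (LINT x:(- Ieps \<mu> \<epsilon>)|\<mu>. \<bar>x - quantile \<mu> (1/2)\<bar> powr p)"
    using h(1,5,6) by (intro rpow_diameter_mult_Wasserstein_trim_le) (auto simp: Pp_def)
next
  fix \<mu> :: "real measure" and \<epsilon> :: real
  assume h: "\<mu> \<in> Pp p" "atomless \<mu>" "0 < \<epsilon>" "\<epsilon> < 1/2"
  interpret quantile_trimming \<mu> \<epsilon>
    using h by (rule quantile_trimming_if_Pp)
  show "Wasserstein p \<mu> (trim \<epsilon> \<mu>) powr p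
      \<le> (LINT x:(- Ieps \<mu> \<epsilon>)|\<mu>. \<bar>x - quantile \<mu> (1/2)\<bar> powr p)"
    using h(1) assms by (intro Wasserstein_trim_powr_le) (auto simp: Pp_def)
qed

end
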